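(* Let $K$ be a field and $|\cdot|:K\to R$ a multiplicative generalized seminorm. Suppose that either there exists $u\in K$ with $|u|>2$, or there exists $a\in K$ with $|a|>0$ such that for all $b\in K$, $|b|<|a|$ implies $|b|=0$. Then $K$ has tiny balls for $|\cdot|$, so that $|\cdot|$ induces a ring topology (the ball neighborhood topology) on $K$, and this topology is separated (Hausdorff).
   Context: A halo is a commutative unital semiring with a partial order compatible with $+$ and $\cdot$; an aura is a halo whose semiring is a semifield; positive means $0<1$. A generalized seminorm is a map $|\cdot|:A\to R$ into a positive totally ordered aura with $|0|=0,|1|=1$, $|a+b|\le|a|+|b|$, $|ab|\le|a||b|$; multiplicative if $|ab|=|a||b|$; $2=1+1$. For $x,a\in A$ with $|a|>0$, $B(x,|a|)=\{z:|z-x|<|a|\}$. $|\cdot|$ has tiny balls if for every $a$ with $|a|>0$: there is $a'$ with $|a'|>0$ and $B(0,|a'|)+B(0,|a'|)\subset B(0,|a|)$; for every $x\in A$ there is $c$ with $|c|>0$ and $xB(0,|c|)\subset B(0,|a|)$; there is $a'$ with $|a'|>0$ and $B(0,|a'|)B(0,|a'|)\subset B(0,|a|)$; there is $a'$ with $|a'|>0$ and $-B(0,|a'|)\subset B(0,|a|)$. The ball neighborhood topology is the topology in which the non-empty open balls centered at each point form a fundamental system of neighborhoods of that point. *)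

theory Defs
  imports "HOL-Analysis.Analysis"
begin

definition pos_tot_aura :: "'r::{comm_semiring_1, linorder} itself \<Rightarrow> bool" where
  "pos_tot_aura _ \<longleftrightarrow>
     (\<forall>a b c :: 'r. a \<le> b \<longrightarrow> a + c \<le> b + c) \<and>
     (\<forall>a b c :: 'r. a \<le> b \<longrightarrow> a * c \<le> b * c) \<and>
     (\<forall>a :: 'r. a \<noteq> 0 \<longrightarrow> (\<exists>b. a * b = 1)) \<and>
     (0 :: 'r) < 1"

definition gen_seminorm :: "('a::ring_1 \<Rightarrow> 'r::{comm_semiring_1, linorder}) \<Rightarrow> bool" where
  "gen_seminorm N \<longleftrightarrow> pos_tot_aura TYPE('r) \<and>
     N 0 = 0 \<and> N 1 = 1 \<and>
     (\<forall>a b. N (a + b) \<le> N a + N b) \<and>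
     (\<forall>a b. N (a * b) \<le> N a * N b)"

definition mult_gen_seminorm :: "('a::ring_1 \<Rightarrow> 'r::{comm_semiring_1, linorder}) \<Rightarrow> bool" where
  "mult_gen_seminorm N \<longleftrightarrow> gen_seminorm N \<and> (\<forall>a b. N (a * b) = N a * N b)"

definition nball :: "('a::ring_1 \<Rightarrow> 'r::linorder) \<Rightarrow> 'a \<Rightarrow> 'r \<Rightarrow> 'a set" where
  "nball N x r = {z. N (z - x) < r}"

definition tiny_balls :: "('a::ring_1 \<Rightarrow> 'r::{comm_semiring_1, linorder}) \<Rightarrow> bool" where
  "tiny_balls N \<longleftrightarrow>
     (\<forall>a. 0 < N a \<longrightarrow>
        (\<exists>a'. 0 < N a' \<and> {y + z | y z. y \<in> nball N 0 (N a') \<and> z \<in> nball N 0 (N a')} \<subseteq> nball N 0 (N a)) \<and>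
        (\<forall>x. \<exists>c. 0 < N c \<and> (\<lambda>z. x * z) ` nball N 0 (N c) \<subseteq> nball N 0 (N a)) \<and>
        (\<exists>a'. 0 < N a' \<and> {y * z | y z. y \<in> nball N 0 (N a') \<and> z \<in> nball N 0 (N a')} \<subseteq> nball N 0 (N a)) \<and>
        (\<exists>a'. 0 < N a' \<and> uminus ` nball N 0 (N a') \<subseteq> nball N 0 (N a)))"

definition ball_topology :: "('a::ring_1 \<Rightarrow> 'r::{comm_semiring_1, linorder}) \<Rightarrow> 'a topology" where
  "ball_topology N = topology (\<lambda>U. \<forall>x\<in>U. \<exists>a. 0 < N a \<and> nball N x (N a) \<subseteq> U)"

definition balls_nhd_base :: "('a::ring_1 \<Rightarrow> 'r::{comm_semiring_1, linorder}) \<Rightarrow> 'a topology \<Rightarrow> bool" where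
  "balls_nhd_base N T \<longleftrightarrow> topspace T = UNIV \<and>
     (\<forall>x a. 0 < N a \<longrightarrow> (\<exists>U. openin T U \<and> x \<in> U \<and> U \<subseteq> nball N x (N a))) \<and>
     (\<forall>x U. openin T U \<and> x \<in> U \<longrightarrow> (\<exists>a. 0 < N a \<and> nball N x (N a) \<subseteq> U))"

definition ring_topology :: "'a::ring_1 topology \<Rightarrow> bool" where
  "ring_topology T \<longleftrightarrow> topspace T = UNIV \<and>
     continuous_map (prod_topology T T) T (\<lambda>(x, y). x + y) \<and>
     continuous_map (prod_topology T T) T (\<lambda>(x, y). x * y) \<and>
     continuous_map T T uminus"

end

theory Submission
  imports Defs
begin

text \<open>The whole topological content of the theorem is carried by one property of the
  absolute value: sums of sufficiently small elements are small.  For a multiplicative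
  seminorm on a field, small left multiples and small products come for free (divide the
  radius by \<open>|x|\<close>, resp. take a radius whose square is below the given one), so this
  property is equivalent to tiny balls.  It holds if some \<open>|u| > 2\<close>, since then
  \<open>|y + z| < 2|a/u| < |a|\<close> for \<open>|y|, |z| < |a/u|\<close>, and it holds if some ball of positive
  radius is \<open>{0}\<close>.  Given small sums, the interiors of balls are open, which makes the balls
  a neighbourhood base; continuity of the ring operations is the usual estimate
  \<open>x'y' - xy = (x' - x)(y' - y) + x(y' - y) + y(x' - x)\<close>, and separation follows from
  \<open>|x - y| > 0\<close> for \<open>x \<noteq> y\<close>.\<close>

section \<open>Arithmetic in a positive totally ordered aura\<close>

context
  fixes R :: "'r::{comm_semiring_1, linorder} itself"
  assumes aura: "pos_tot_aura R"
begin

lemma pos_tot_aura_zero_less_one: "(0::'r) < 1"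
  using aura by (simp add: pos_tot_aura_def)

lemma pos_tot_aura_mult_right_mono: "(a::'r) \<le> b \<Longrightarrow> a * c \<le> b * c"
  using aura by (simp add: pos_tot_aura_def)

lemma pos_tot_aura_mult_left_mono: "(a::'r) \<le> b \<Longrightarrow> c * a \<le> c * b"
  using pos_tot_aura_mult_right_mono by (simp add: mult.commute)

lemma pos_tot_aura_nonneg: "0 \<le> (c::'r)"
  using pos_tot_aura_mult_right_mono[of 0 1 c] pos_tot_aura_zero_less_one by simp

lemma pos_tot_aura_add_mono:
  assumes "(a::'r) \<le> b" "c \<le> d"
  shows "a + c \<le> b + d"
proof -
  have mono: "\<forall>a b c::'r. a \<le> b \<longrightarrow> a + c \<le> b + c"
    using aura by (simp add: pos_tot_aura_def)
  have "a + c \<le> b + c" using mono assms(1) by blast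
  also have "\<dots> = c + b" by (rule add.commute)
  also have "\<dots> \<le> d + b" using mono assms(2) by blast
  finally show ?thesis by (simp add: add.commute)
qed

text \<open>Strictness is preserved because a positive element is invertible, hence cancellable.\<close>
lemma pos_tot_aura_mult_strict_right_mono:
  assumes "(a::'r) < b" "0 < c"
  shows "a * c < b * c"
proof -
  have "\<forall>a::'r. a \<noteq> 0 \<longrightarrow> (\<exists>b. a * b = 1)"
    using aura by (simp add: pos_tot_aura_def)
  then obtain d where d: "c * d = 1"
    using assms(2) by fastforce
  have "a * c \<noteq> b * c"
  proof
    assume "a * c = b * c"
    then have "a * c * d = b * c * d" by simp
    then show False using d assms(1) by (simp add: mult.assoc)
  qed
  then show ?thesis using pos_tot_aura_mult_right_mono assms(1) by (simp add: order_le_neq_trans)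
qed

end

lemma gen_seminorm_aura: "gen_seminorm N \<Longrightarrow> pos_tot_aura TYPE('r)"
  for N :: "'a::ring_1 \<Rightarrow> 'r::{comm_semiring_1, linorder}"
  by (simp add: gen_seminorm_def)

lemma gen_seminorm_zero: "gen_seminorm N \<Longrightarrow> N 0 = 0"
  by (simp add: gen_seminorm_def)

lemma gen_seminorm_one: "gen_seminorm N \<Longrightarrow> N 1 = 1"
  by (simp add: gen_seminorm_def)

lemma gen_seminorm_triangle: "gen_seminorm N \<Longrightarrow> N (a + b) \<le> N a + N b"
  by (simp add: gen_seminorm_def)

lemma gen_seminorm_zero_less_one: "gen_seminorm N \<Longrightarrow> 0 < N 1"
  for N :: "'a::ring_1 \<Rightarrow> 'r::{comm_semiring_1, linorder}"
  using gen_seminorm_one pos_tot_aura_zero_less_one[OF gen_seminorm_aura] by metis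

context
  fixes N :: "'k::field \<Rightarrow> 'r::{comm_semiring_1, linorder}"
  assumes mult: "mult_gen_seminorm N"
begin

lemma mult_gen_seminorm_gen_seminorm: "gen_seminorm N"
  using mult by (simp add: mult_gen_seminorm_def)

lemma mult_gen_seminorm_aura: "pos_tot_aura TYPE('r)"
  using gen_seminorm_aura[OF mult_gen_seminorm_gen_seminorm] .

lemma mult_gen_seminorm_mult: "N (a * b) = N a * N b"
  using mult by (simp add: mult_gen_seminorm_def)

lemma mult_gen_seminorm_inverse: "x \<noteq> 0 \<Longrightarrow> N x * N (inverse x) = 1"
  using mult_gen_seminorm_mult[of x "inverse x"] gen_seminorm_one[OF mult_gen_seminorm_gen_seminorm]
  by simp

lemma mult_gen_seminorm_pos_iff: "0 < N x \<longleftrightarrow> x \<noteq> 0"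
proof
  assume "x \<noteq> 0"
  then have "N x * N (inverse x) = 1" by (rule mult_gen_seminorm_inverse)
  then have "N x \<noteq> 0" using pos_tot_aura_zero_less_one[OF mult_gen_seminorm_aura] by auto
  then show "0 < N x" using pos_tot_aura_nonneg[OF mult_gen_seminorm_aura, of "N x"] by simp
qed (use gen_seminorm_zero[OF mult_gen_seminorm_gen_seminorm] in auto)

text \<open>\<open>|-1|\<close> squares to \<open>1\<close>, and in a totally ordered aura only \<open>1\<close> does.\<close>
lemma mult_gen_seminorm_minus_one: "N (- 1) = 1"
proof -
  let ?t = "N (- 1)"
  have sq: "?t * ?t = 1"
    using mult_gen_seminorm_mult[of "- 1" "- 1"] gen_seminorm_one[OF mult_gen_seminorm_gen_seminorm]
    by simp
  show ?thesis
  proof (rule ccontr)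
    assume "?t \<noteq> 1"
    then consider "?t < 1" | "1 < ?t" by (meson linorder_neqE)
    then show False
    proof cases
      case 1
      then have "?t * ?t \<le> 1 * ?t"
        by (intro pos_tot_aura_mult_right_mono[OF mult_gen_seminorm_aura]) simp
      then show False using sq 1 by simp
    next
      case 2
      then have "1 * ?t \<le> ?t * ?t"
        by (intro pos_tot_aura_mult_right_mono[OF mult_gen_seminorm_aura]) simp
      then show False using sq 2 by simp
    qed
  qed
qed

lemma mult_gen_seminorm_minus: "N (- x) = N x"
  using mult_gen_seminorm_mult[of "- 1" x] mult_gen_seminorm_minus_one by simp

lemma mult_gen_seminorm_diff_commute: "N (x - y) = N (y - x)"
  using mult_gen_seminorm_minus[of "y - x"] by simp

end

section \<open>Small sums and tiny balls\<close>

definition small_sums :: "('a::ring_1 \<Rightarrow> 'r::{comm_semiring_1, linorder}) \<Rightarrow> bool" where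
  "small_sums N \<longleftrightarrow> (\<forall>a. 0 < N a \<longrightarrow>
     (\<exists>a'. 0 < N a' \<and> (\<forall>y z. N y < N a' \<longrightarrow> N z < N a' \<longrightarrow> N (y + z) < N a)))"

lemma small_sumsD:
  assumes "small_sums N" "0 < N a"
  obtains a' where "0 < N a'" "\<And>y z. N y < N a' \<Longrightarrow> N z < N a' \<Longrightarrow> N (y + z) < N a"
  using assms unfolding small_sums_def by blast

context
  fixes N :: "'k::field \<Rightarrow> 'r::{comm_semiring_1, linorder}"
  assumes mult: "mult_gen_seminorm N"
begin

lemma small_sums_if_norm_greater_two:
  assumes u: "N u > 2"
  shows "small_sums N"
  unfolding small_sums_def
proof (intro allI impI)
  note aura = mult_gen_seminorm_aura[OF mult]
  fix a assume a: "0 < N a"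
  have "u \<noteq> 0"
    using u gen_seminorm_zero[OF mult_gen_seminorm_gen_seminorm[OF mult]]
      pos_tot_aura_nonneg[OF aura, of 2] by auto
  then have inv: "N u * N (inverse u) = 1" and "0 < N (inverse u)"
    using mult_gen_seminorm_inverse[OF mult] mult_gen_seminorm_pos_iff[OF mult] by auto
  then have pos: "0 < N (a * inverse u)"
    using pos_tot_aura_mult_strict_right_mono[OF aura a] mult_gen_seminorm_mult[OF mult] by force
  have "N (y + z) < N a" if "N y < N (a * inverse u)" "N z < N (a * inverse u)" for y z
  proof -
    have "N (y + z) \<le> N y + N z"
      using gen_seminorm_triangle[OF mult_gen_seminorm_gen_seminorm[OF mult]] .
    also have "\<dots> \<le> N (a * inverse u) + N (a * inverse u)"
      using that by (intro pos_tot_aura_add_mono[OF aura]) auto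
    also have "\<dots> = 2 * N (a * inverse u)" by (simp add: mult_2)
    also have "\<dots> < N u * N (a * inverse u)"
      using pos_tot_aura_mult_strict_right_mono[OF aura u pos] .
    also have "\<dots> = N a"
      using inv mult_gen_seminorm_mult[OF mult, of a "inverse u"] by (simp add: ac_simps)
    finally show ?thesis .
  qed
  then show "\<exists>a'. 0 < N a' \<and> (\<forall>y z. N y < N a' \<longrightarrow> N z < N a' \<longrightarrow> N (y + z) < N a)"
    using pos by blast
qed

lemma small_sums_if_discrete:
  assumes "0 < N a0" "\<And>b. N b < N a0 \<Longrightarrow> N b = 0"
  shows "small_sums N"
  unfolding small_sums_def
proof (intro allI impI)
  fix a assume a: "0 < N a"
  have "N (y + z) < N a" if "N y < N a0" "N z < N a0" for y z
  proof -
    have "N y = 0" "N z = 0" using that assms(2) by blast+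
    then have "y = 0" "z = 0"
      using mult_gen_seminorm_pos_iff[OF mult, of y] mult_gen_seminorm_pos_iff[OF mult, of z] by auto
    then show ?thesis using a gen_seminorm_zero[OF mult_gen_seminorm_gen_seminorm[OF mult]] by simp
  qed
  then show "\<exists>a'. 0 < N a' \<and> (\<forall>y z. N y < N a' \<longrightarrow> N z < N a' \<longrightarrow> N (y + z) < N a)"
    using assms(1) by blast
qed

lemma small_left_multiples:
  assumes "0 < N a"
  obtains c where "0 < N c" "\<And>t. N t < N c \<Longrightarrow> N (x * t) < N a"
proof (cases "x = 0")
  case True
  show ?thesis
  proof (rule that)
    show "0 < N 1" using gen_seminorm_zero_less_one[OF mult_gen_seminorm_gen_seminorm[OF mult]] .
    show "N (x * t) < N a" for t
      using True assms gen_seminorm_zero[OF mult_gen_seminorm_gen_seminorm[OF mult]] by simp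
  qed
next
  case False
  note aura = mult_gen_seminorm_aura[OF mult]
  have x: "0 < N x" and inv: "N x * N (inverse x) = 1"
    using False mult_gen_seminorm_pos_iff[OF mult] mult_gen_seminorm_inverse[OF mult] by auto
  have "0 < N (a * inverse x)"
    using assms False mult_gen_seminorm_pos_iff[OF mult] by simp
  moreover have "N (x * t) < N a" if "N t < N (a * inverse x)" for t
  proof -
    have "N t * N x < N (a * inverse x) * N x"
      using pos_tot_aura_mult_strict_right_mono[OF aura that x] .
    also have "\<dots> = N a"
      using inv mult_gen_seminorm_mult[OF mult, of a "inverse x"] by (simp add: ac_simps)
    finally show ?thesis using mult_gen_seminorm_mult[OF mult, of x t] by (simp add: mult.commute)
  qed
  ultimately show ?thesis using that by blast
qed

lemma small_products:
  assumes "0 < N a"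
  obtains e where "0 < N e" "\<And>s t. N s < N e \<Longrightarrow> N t < N e \<Longrightarrow> N (s * t) < N a"
proof -
  note aura = mult_gen_seminorm_aura[OF mult]
  obtain e where e: "0 < N e" "N e * N e \<le> N a"
  proof (cases "N a \<le> 1")
    case True
    then show ?thesis
      using that assms pos_tot_aura_mult_left_mono[OF aura True, of "N a"] by simp
  next
    case False
    then show ?thesis
      using that[of 1] gen_seminorm_one[OF mult_gen_seminorm_gen_seminorm[OF mult]]
        pos_tot_aura_zero_less_one[OF aura] by simp
  qed
  have "N (s * t) < N a" if "N s < N e" "N t < N e" for s t
  proof -
    have "N s * N t \<le> N s * N e"
      using pos_tot_aura_mult_left_mono[OF aura] that(2) by simp
    also have "\<dots> < N e * N e" using pos_tot_aura_mult_strict_right_mono[OF aura that(1) e(1)] .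
    also have "\<dots> \<le> N a" using e(2) .
    finally show ?thesis using mult_gen_seminorm_mult[OF mult] by simp
  qed
  then show ?thesis using that e(1) by blast
qed

lemma tiny_balls_iff_small_sums: "tiny_balls N \<longleftrightarrow> small_sums N"
proof
  assume "tiny_balls N"
  then show "small_sums N"
    unfolding tiny_balls_def small_sums_def nball_def by (force simp: subset_iff)
next
  assume sums: "small_sums N"
  show "tiny_balls N"
    unfolding tiny_balls_def
  proof (intro allI impI)
    fix a assume a: "0 < N a"
    obtain a' where "0 < N a'" "\<And>y z. N y < N a' \<Longrightarrow> N z < N a' \<Longrightarrow> N (y + z) < N a"
      using small_sumsD[OF sums a] by blast
    then have add: "\<exists>a'. 0 < N a' \<and>
        {y + z |y z. y \<in> nball N 0 (N a') \<and> z \<in> nball N 0 (N a')} \<subseteq> nball N 0 (N a)"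
      by (auto simp: nball_def)
    have left: "\<exists>c. 0 < N c \<and> (*) x ` nball N 0 (N c) \<subseteq> nball N 0 (N a)" for x
    proof -
      obtain c where "0 < N c" "\<And>t. N t < N c \<Longrightarrow> N (x * t) < N a"
        using small_left_multiples[OF a] by blast
      then show ?thesis by (auto simp: nball_def)
    qed
    obtain e where "0 < N e" "\<And>s t. N s < N e \<Longrightarrow> N t < N e \<Longrightarrow> N (s * t) < N a"
      using small_products[OF a] by blast
    then have prod: "\<exists>a'. 0 < N a' \<and>
        {y * z |y z. y \<in> nball N 0 (N a') \<and> z \<in> nball N 0 (N a')} \<subseteq> nball N 0 (N a)"
      by (auto simp: nball_def)
    have minus: "\<exists>a'. 0 < N a' \<and> uminus ` nball N 0 (N a') \<subseteq> nball N 0 (N a)"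
      using a mult_gen_seminorm_minus[OF mult] by (auto simp: nball_def)
    show "(\<exists>a'. 0 < N a' \<and>
        {y + z |y z. y \<in> nball N 0 (N a') \<and> z \<in> nball N 0 (N a')} \<subseteq> nball N 0 (N a)) \<and>
      (\<forall>x. \<exists>c. 0 < N c \<and> (*) x ` nball N 0 (N c) \<subseteq> nball N 0 (N a)) \<and>
      (\<exists>a'. 0 < N a' \<and>
        {y * z |y z. y \<in> nball N 0 (N a') \<and> z \<in> nball N 0 (N a')} \<subseteq> nball N 0 (N a)) \<and>
      (\<exists>a'. 0 < N a' \<and> uminus ` nball N 0 (N a') \<subseteq> nball N 0 (N a))"
      by (intro conjI allI add left prod minus)
  qed
qed

end

section \<open>The ball topology\<close>

lemma openin_ball_topology:
  "openin (ball_topology N) U \<longleftrightarrow> (\<forall>x\<in>U. \<exists>a. 0 < N a \<and> nball N x (N a) \<subseteq> U)"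
proof -
  have "istopology (\<lambda>U. \<forall>x\<in>U. \<exists>a. 0 < N a \<and> nball N x (N a) \<subseteq> U)"
    unfolding istopology_def
  proof (intro conjI allI impI)
    fix S T assume S: "\<forall>x\<in>S. \<exists>a. 0 < N a \<and> nball N x (N a) \<subseteq> S"
      and T: "\<forall>x\<in>T. \<exists>a. 0 < N a \<and> nball N x (N a) \<subseteq> T"
    show "\<forall>x\<in>S \<inter> T. \<exists>a. 0 < N a \<and> nball N x (N a) \<subseteq> S \<inter> T"
    proof
      fix x assume "x \<in> S \<inter> T"
      then obtain a b where a: "0 < N a" "nball N x (N a) \<subseteq> S"
        and b: "0 < N b" "nball N x (N b) \<subseteq> T"
        using S T by blast
      define d where "d = (if N a \<le> N b then a else b)"
      have "0 < N d" "nball N x (N d) \<subseteq> nball N x (N a)" "nball N x (N d) \<subseteq> nball N x (N b)"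
        using a(1) b(1) unfolding d_def nball_def by auto
      then show "\<exists>d. 0 < N d \<and> nball N x (N d) \<subseteq> S \<inter> T"
        using a(2) b(2) by blast
    qed
  next
    fix \<K> assume \<K>: "\<forall>S\<in>\<K>. \<forall>x\<in>S. \<exists>a. 0 < N a \<and> nball N x (N a) \<subseteq> S"
    show "\<forall>x\<in>\<Union>\<K>. \<exists>a. 0 < N a \<and> nball N x (N a) \<subseteq> \<Union>\<K>"
    proof
      fix x assume "x \<in> \<Union>\<K>"
      then obtain S where S: "S \<in> \<K>" "x \<in> S" by blast
      then obtain a where "0 < N a" "nball N x (N a) \<subseteq> S" using \<K> by blast
      then show "\<exists>a. 0 < N a \<and> nball N x (N a) \<subseteq> \<Union>\<K>" using S(1) by blast
    qed
  qed
  then show ?thesis unfolding ball_topology_def by simp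
qed

context
  fixes N :: "'a::ring_1 \<Rightarrow> 'r::{comm_semiring_1, linorder}"
  assumes seminorm: "gen_seminorm N"
begin

lemma topspace_ball_topology: "topspace (ball_topology N) = UNIV"
  using gen_seminorm_zero_less_one[OF seminorm]
  unfolding topspace_def openin_ball_topology by blast

text \<open>The interior of a ball is the set of its points around which it contains a ball;
  small sums make this set open, although the ball itself need not be.\<close>
lemma open_subset_nball:
  assumes sums: "small_sums N" and "0 < N a"
  obtains U where "openin (ball_topology N) U" "x \<in> U" "U \<subseteq> nball N x (N a)"
proof -
  define U where "U = {y. \<exists>b. 0 < N b \<and> nball N y (N b) \<subseteq> nball N x (N a)}"
  have center: "y \<in> nball N y (N b)" if "0 < N b" for y b
    using that gen_seminorm_zero[OF seminorm] by (simp add: nball_def)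
  have "openin (ball_topology N) U"
    unfolding openin_ball_topology
  proof
    fix y assume "y \<in> U"
    then obtain b where b: "0 < N b" "nball N y (N b) \<subseteq> nball N x (N a)"
      unfolding U_def by blast
    obtain b' where b': "0 < N b'" "\<And>v w. N v < N b' \<Longrightarrow> N w < N b' \<Longrightarrow> N (v + w) < N b"
      using small_sumsD[OF sums b(1)] by blast
    have "nball N w (N b') \<subseteq> nball N y (N b)" if "w \<in> nball N y (N b')" for w
      using that b'(2)[of "_ - w" "w - y"] by (auto simp: nball_def)
    then have "nball N y (N b') \<subseteq> U"
      using b'(1) b(2) unfolding U_def by blast
    then show "\<exists>b. 0 < N b \<and> nball N y (N b) \<subseteq> U" using b'(1) by blast
  qed
  moreover have "U \<subseteq> nball N x (N a)" using center unfolding U_def by blast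
  moreover have "x \<in> U" using assms(2) unfolding U_def by blast
  ultimately show ?thesis using that by blast
qed

lemma balls_nhd_base_ball_topology:
  "small_sums N \<Longrightarrow> balls_nhd_base N (ball_topology N)"
  unfolding balls_nhd_base_def
  using topspace_ball_topology open_subset_nball openin_ball_topology by metis

lemma continuous_map_ball_topology:
  assumes sums: "small_sums N"
    and local: "\<And>x a. 0 < N a \<Longrightarrow>
      \<exists>b. 0 < N b \<and> (\<forall>x'. N (x' - x) < N b \<longrightarrow> N (f x' - f x) < N a)"
  shows "continuous_map (ball_topology N) (ball_topology N) f"
  unfolding continuous_map_def topspace_ball_topology
proof (intro conjI allI impI)
  fix U assume U: "openin (ball_topology N) U"
  show "openin (ball_topology N) {x \<in> UNIV. f x \<in> U}"
  proof (subst openin_subopen, intro ballI)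
    fix x assume "x \<in> {x \<in> UNIV. f x \<in> U}"
    then obtain a where a: "0 < N a" "nball N (f x) (N a) \<subseteq> U"
      using U unfolding openin_ball_topology by auto
    obtain b where b: "0 < N b" "\<forall>x'. N (x' - x) < N b \<longrightarrow> N (f x' - f x) < N a"
      using local[OF a(1)] by blast
    obtain V where "openin (ball_topology N) V" "x \<in> V" "V \<subseteq> nball N x (N b)"
      using open_subset_nball[OF sums b(1)] by blast
    moreover have "V \<subseteq> {x \<in> UNIV. f x \<in> U}"
      using calculation(3) a(2) b(2) by (auto simp: nball_def)
    ultimately show "\<exists>V. openin (ball_topology N) V \<and> x \<in> V \<and> V \<subseteq> {x \<in> UNIV. f x \<in> U}"
      by blast
  qed
qed auto

lemma continuous_map_ball_topology_prod:
  assumes sums: "small_sums N"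
    and local: "\<And>x y a. 0 < N a \<Longrightarrow> \<exists>b c. 0 < N b \<and> 0 < N c \<and>
      (\<forall>x' y'. N (x' - x) < N b \<longrightarrow> N (y' - y) < N c \<longrightarrow> N (g x' y' - g x y) < N a)"
  shows "continuous_map (prod_topology (ball_topology N) (ball_topology N)) (ball_topology N)
           (\<lambda>(x, y). g x y)"
  unfolding continuous_map_def topspace_prod_topology topspace_ball_topology
proof (intro conjI allI impI)
  let ?P = "prod_topology (ball_topology N) (ball_topology N)"
  fix U assume U: "openin (ball_topology N) U"
  show "openin ?P {p \<in> UNIV \<times> UNIV. (\<lambda>(x, y). g x y) p \<in> U}" (is "openin ?P ?S")
  proof (subst openin_subopen, intro ballI)
    fix p assume "p \<in> ?S"
    then obtain x y where p: "p = (x, y)" "g x y \<in> U" by (cases p) auto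
    obtain a where a: "0 < N a" "nball N (g x y) (N a) \<subseteq> U"
      using U p(2) unfolding openin_ball_topology by blast
    obtain b c where bc: "0 < N b" "0 < N c"
      "\<forall>x' y'. N (x' - x) < N b \<longrightarrow> N (y' - y) < N c \<longrightarrow> N (g x' y' - g x y) < N a"
      using local[OF a(1)] by blast
    obtain V where V: "openin (ball_topology N) V" "x \<in> V" "V \<subseteq> nball N x (N b)"
      using open_subset_nball[OF sums bc(1)] by blast
    obtain W where W: "openin (ball_topology N) W" "y \<in> W" "W \<subseteq> nball N y (N c)"
      using open_subset_nball[OF sums bc(2)] by blast
    have "openin ?P (V \<times> W)" using V(1) W(1) by (simp add: openin_prod_Times_iff)
    moreover have "V \<times> W \<subseteq> ?S"
    proof
      fix q assume "q \<in> V \<times> W"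
      then obtain x' y' where q: "q = (x', y')" "x' \<in> V" "y' \<in> W" by blast
      then have "N (x' - x) < N b" "N (y' - y) < N c" using V(3) W(3) unfolding nball_def by blast+
      then have "g x' y' \<in> nball N (g x y) (N a)" using bc(3) by (simp add: nball_def)
      then have "g x' y' \<in> U" using a(2) by blast
      then show "q \<in> ?S" using q(1) by simp
    qed
    ultimately show "\<exists>T. openin ?P T \<and> p \<in> T \<and> T \<subseteq> ?S" using p(1) V(2) W(2) by blast
  qed
qed auto

end

context
  fixes N :: "'k::field \<Rightarrow> 'r::{comm_semiring_1, linorder}"
  assumes mult: "mult_gen_seminorm N" and sums: "small_sums N"
begin

lemma continuous_map_ball_topology_add:
  "continuous_map (prod_topology (ball_topology N) (ball_topology N)) (ball_topology N)
     (\<lambda>(x, y). x + y)"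
proof (rule continuous_map_ball_topology_prod[OF mult_gen_seminorm_gen_seminorm[OF mult] sums])
  fix x y :: 'k and a assume "0 < N a"
  then obtain a' where "0 < N a'" "\<And>v w. N v < N a' \<Longrightarrow> N w < N a' \<Longrightarrow> N (v + w) < N a"
    using small_sumsD[OF sums] by blast
  moreover have "x' + y' - (x + y) = (x' - x) + (y' - y)" for x' y' :: 'k by simp
  ultimately show "\<exists>b c. 0 < N b \<and> 0 < N c \<and>
      (\<forall>x' y'. N (x' - x) < N b \<longrightarrow> N (y' - y) < N c \<longrightarrow> N (x' + y' - (x + y)) < N a)"
    by metis
qed

lemma continuous_map_ball_topology_mult:
  "continuous_map (prod_topology (ball_topology N) (ball_topology N)) (ball_topology N)
     (\<lambda>(x, y). x * y)"
proof (rule continuous_map_ball_topology_prod[OF mult_gen_seminorm_gen_seminorm[OF mult] sums])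
  fix x y :: 'k and a assume a: "0 < N a"
  obtain a1 where a1: "0 < N a1" "\<And>v w. N v < N a1 \<Longrightarrow> N w < N a1 \<Longrightarrow> N (v + w) < N a"
    using small_sumsD[OF sums a] by blast
  obtain a2 where a2: "0 < N a2" "\<And>v w. N v < N a2 \<Longrightarrow> N w < N a2 \<Longrightarrow> N (v + w) < N a1"
    using small_sumsD[OF sums a1(1)] by blast
  obtain e where e: "0 < N e" "\<And>s t. N s < N e \<Longrightarrow> N t < N e \<Longrightarrow> N (s * t) < N a2"
    using small_products[OF mult a2(1)] by blast
  obtain c1 where c1: "0 < N c1" "\<And>t. N t < N c1 \<Longrightarrow> N (x * t) < N a2"
    using small_left_multiples[OF mult a2(1)] by blast
  obtain c2 where c2: "0 < N c2" "\<And>t. N t < N c2 \<Longrightarrow> N (y * t) < N a1"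
    using small_left_multiples[OF mult a1(1)] by blast
  define b where "b = (if N e \<le> N c2 then e else c2)"
  define c where "c = (if N e \<le> N c1 then e else c1)"
  have b: "0 < N b" "N b \<le> N e" "N b \<le> N c2" and c: "0 < N c" "N c \<le> N e" "N c \<le> N c1"
    using e(1) c1(1) c2(1) unfolding b_def c_def by auto
  have "N (x' * y' - x * y) < N a" if "N (x' - x) < N b" "N (y' - y) < N c" for x' y'
  proof -
    have "x' * y' - x * y = ((x' - x) * (y' - y) + x * (y' - y)) + y * (x' - x)"
      by (simp add: algebra_simps)
    moreover have "N ((x' - x) * (y' - y) + x * (y' - y)) < N a1"
      using that b c by (intro a2(2) e(2) c1(2)) auto
    moreover have "N (y * (x' - x)) < N a1"
      using that b by (intro c2(2)) auto
    ultimately show ?thesis by (metis a1(2))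
  qed
  then show "\<exists>b c. 0 < N b \<and> 0 < N c \<and>
      (\<forall>x' y'. N (x' - x) < N b \<longrightarrow> N (y' - y) < N c \<longrightarrow> N (x' * y' - x * y) < N a)"
    using b(1) c(1) by blast
qed

lemma continuous_map_ball_topology_uminus:
  "continuous_map (ball_topology N) (ball_topology N) uminus"
  using mult_gen_seminorm_diff_commute[OF mult] mult_gen_seminorm_minus[OF mult]
  by (intro continuous_map_ball_topology[OF mult_gen_seminorm_gen_seminorm[OF mult] sums])
    (metis minus_diff_minus)

lemma ring_topology_ball_topology: "ring_topology (ball_topology N)"
  unfolding ring_topology_def
  using topspace_ball_topology[OF mult_gen_seminorm_gen_seminorm[OF mult]]
    continuous_map_ball_topology_add continuous_map_ball_topology_mult
    continuous_map_ball_topology_uminus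
  by blast

lemma Hausdorff_space_ball_topology: "Hausdorff_space (ball_topology N)"
  unfolding Hausdorff_space_def
proof (intro allI impI)
  fix x y :: 'k assume "x \<in> topspace (ball_topology N) \<and> y \<in> topspace (ball_topology N) \<and> x \<noteq> y"
  then have "0 < N (y - x)" using mult_gen_seminorm_pos_iff[OF mult] by auto
  then obtain a where a: "0 < N a" "\<And>v w. N v < N a \<Longrightarrow> N w < N a \<Longrightarrow> N (v + w) < N (y - x)"
    using small_sumsD[OF sums] by blast
  obtain U where U: "openin (ball_topology N) U" "x \<in> U" "U \<subseteq> nball N x (N a)"
    using open_subset_nball[OF mult_gen_seminorm_gen_seminorm[OF mult] sums a(1)] by blast
  obtain V where V: "openin (ball_topology N) V" "y \<in> V" "V \<subseteq> nball N y (N a)"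
    using open_subset_nball[OF mult_gen_seminorm_gen_seminorm[OF mult] sums a(1)] by blast
  have "disjnt U V"
    unfolding disjnt_def
  proof (rule equals0I)
    fix z assume "z \<in> U \<inter> V"
    then have "N (z - x) < N a" "N (y - z) < N a"
      using U(3) V(3) mult_gen_seminorm_diff_commute[OF mult, of z y] by (auto simp: nball_def)
    then have "N ((z - x) + (y - z)) < N (y - x)" by (rule a(2))
    then show False by simp
  qed
  then show "\<exists>U V. openin (ball_topology N) U \<and> openin (ball_topology N) V \<and>
      x \<in> U \<and> y \<in> V \<and> disjnt U V"
    using U V by blast
qed

end

theorem proposition4p7:
  fixes N :: "'k::field \<Rightarrow> 'r::{comm_semiring_1, linorder}"
  assumes "mult_gen_seminorm N"
    and "(\<exists>u. N u > 2) \<or> (\<exists>a. 0 < N a \<and> (\<forall>b. N b < N a \<longrightarrow> N b = 0))"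
  shows "tiny_balls N \<and> balls_nhd_base N (ball_topology N) \<and>
         ring_topology (ball_topology N) \<and> Hausdorff_space (ball_topology N)"
proof -
  have sums: "small_sums N"
    using assms(2) small_sums_if_norm_greater_two[OF assms(1)]
      small_sums_if_discrete[OF assms(1)] by blast
  show ?thesis
    using tiny_balls_iff_small_sums[OF assms(1)] sums
      balls_nhd_base_ball_topology[OF mult_gen_seminorm_gen_seminorm[OF assms(1)] sums]
      ring_topology_ball_topology[OF assms(1) sums] Hausdorff_space_ball_topology[OF assms(1) sums]
    by blast
qed

end
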